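(* Let $q$ be a prime power, $h\geq 2$, and let $f:\mathbb{F}_{q^h}\to\mathbb{F}_q$ be any nonzero $\mathbb{F}_q$-linear functional. Then there exist $\alpha\in\mathbb{F}_{q^h}\setminus\mathbb{F}_q$ and an $\mathbb{F}_q$-linear functional $g:\mathbb{F}_{q^h}\to\mathbb{F}_q$ such that (1) $g(1)=g(\alpha)=1$; (2) $f(1/\alpha)\neq 0$; (3) $f\left(\frac{k-1}{k(k-1)\alpha-k^2}\right)\neq 1$ for all $k\in\mathbb{F}_q\setminus\{0,1\}$. *)

theory Defs
  imports Main
begin

definition is_subfield :: "'a::field set \<Rightarrow> bool" where
  "is_subfield K \<longleftrightarrow> 0 \<in> K \<and> 1 \<in> K \<and>
     (\<forall>x\<in>K. \<forall>y\<in>K. x + y \<in> K \<and> x * y \<in> K) \<and>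
     (\<forall>x\<in>K. - x \<in> K) \<and> (\<forall>x\<in>K. x \<noteq> 0 \<longrightarrow> inverse x \<in> K)"

definition linear_functional :: "'a::field set \<Rightarrow> ('a \<Rightarrow> 'a) \<Rightarrow> bool" where
  "linear_functional K f \<longleftrightarrow> (\<forall>x. f x \<in> K) \<and>
     (\<forall>x y. f (x + y) = f x + f y) \<and>
     (\<forall>c\<in>K. \<forall>x. f (c * x) = c * f x)"

end

theory Submission
  imports Defs
begin

text \<open>
  Every fibre of a nonzero functional \<open>f\<close> is a translate of its kernel, so it has
  \<open>q\<^sup>h\<^sup>-\<^sup>1\<close> elements. An \<open>\<alpha>\<close> that lies in \<open>K\<close> or violates condition (2) or (3)
  lies in \<open>K - {0}\<close>, in the set \<open>{\<alpha>. f (1/\<alpha>) = 0}\<close> (the image of the kernel under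
  inversion, which contains \<open>0\<close>), or, for one of the \<open>q - 2\<close> values of \<open>k\<close>, in the
  preimage of the fibre \<open>f\<^sup>-\<^sup>1(1)\<close> under an injective fractional linear map. Altogether
  at most \<open>q - 1 + (q - 1) q\<^sup>h\<^sup>-\<^sup>1 < q\<^sup>h\<close> elements are bad. For any \<open>\<alpha> \<notin> K\<close> the
  elements \<open>1\<close> and \<open>\<alpha>\<close> are \<open>K\<close>-independent, and a functional \<open>g\<close> with prescribed
  values on them is assembled from the functionals \<open>x \<mapsto> f (c * x)\<close>.
\<close>

lemma subfield_zero: "is_subfield K \<Longrightarrow> 0 \<in> K"
  and subfield_one: "is_subfield K \<Longrightarrow> 1 \<in> K"
  and subfield_add: "is_subfield K \<Longrightarrow> x \<in> K \<Longrightarrow> y \<in> K \<Longrightarrow> x + y \<in> K"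
  and subfield_mult: "is_subfield K \<Longrightarrow> x \<in> K \<Longrightarrow> y \<in> K \<Longrightarrow> x * y \<in> K"
  and subfield_uminus: "is_subfield K \<Longrightarrow> x \<in> K \<Longrightarrow> - x \<in> K"
  and subfield_inverse: "is_subfield K \<Longrightarrow> x \<in> K \<Longrightarrow> inverse x \<in> K"
  unfolding is_subfield_def by auto

lemma subfield_diff: "is_subfield K \<Longrightarrow> x \<in> K \<Longrightarrow> y \<in> K \<Longrightarrow> x - y \<in> K"
  by (metis diff_conv_add_uminus subfield_add subfield_uminus)

lemma subfield_divide: "is_subfield K \<Longrightarrow> x \<in> K \<Longrightarrow> y \<in> K \<Longrightarrow> x / y \<in> K"
  by (simp add: divide_inverse subfield_inverse subfield_mult)

lemma linear_functional_mem: "linear_functional K f \<Longrightarrow> f x \<in> K"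
  and linear_functional_add: "linear_functional K f \<Longrightarrow> f (x + y) = f x + f y"
  and linear_functional_scale: "linear_functional K f \<Longrightarrow> c \<in> K \<Longrightarrow> f (c * x) = c * f x"
  unfolding linear_functional_def by auto

lemma linear_functional_zero: "linear_functional K f \<Longrightarrow> f 0 = 0"
  using linear_functional_add[of K f 0 0] by (metis add_cancel_right_right)

lemma linear_functional_diff: "linear_functional K f \<Longrightarrow> f (x - y) = f x - f y"
  using linear_functional_add[of K f "x - y" y] by simp

lemma linear_functional_mult_arg:
  "linear_functional K f \<Longrightarrow> linear_functional K (\<lambda>x. f (c * x))"
  unfolding linear_functional_def by (simp add: distrib_left mult.left_commute)

lemma linear_functional_lincomb:
  assumes "is_subfield K" "linear_functional K f" "linear_functional K g" "a \<in> K" "b \<in> K"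
  shows "linear_functional K (\<lambda>x. a * f x + b * g x)"
  using assms unfolding linear_functional_def
  by (auto simp: subfield_add subfield_mult distrib_left mult.left_commute)

lemma linear_functional_attains:
  fixes K :: "'a::field set"
  assumes "is_subfield K" "linear_functional K f" "f x\<^sub>0 \<noteq> 0" "v \<in> K" "y \<noteq> 0"
  shows "\<exists>c. f (c * y) = v"
proof
  have "v / f x\<^sub>0 \<in> K"
    using assms by (simp add: linear_functional_mem subfield_divide)
  then have "f (v / f x\<^sub>0 * x\<^sub>0) = v / f x\<^sub>0 * f x\<^sub>0"
    by (rule linear_functional_scale[OF assms(2)])
  then have "f (v / f x\<^sub>0 * x\<^sub>0) = v"
    using assms(3) by simp
  then show "f (v / f x\<^sub>0 * x\<^sub>0 / y * y) = v"
    using \<open>y \<noteq> 0\<close> by simp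
qed

lemma linear_functional_interpolate:
  fixes K :: "'a::field set"
  assumes sf: "is_subfield K" and lf: "linear_functional K f" and "f x\<^sub>0 \<noteq> 0"
    and "\<alpha> \<notin> K" "a \<in> K" "b \<in> K"
  shows "\<exists>g. linear_functional K g \<and> g 1 = a \<and> g \<alpha> = b"
proof -
  obtain c\<^sub>0 where c\<^sub>0: "f (c\<^sub>0 * 1) = 1"
    using linear_functional_attains[OF sf lf \<open>f x\<^sub>0 \<noteq> 0\<close> subfield_one[OF sf], of 1] by auto
  define \<phi> where "\<phi> x = f (c\<^sub>0 * x)" for x
  define \<beta> where "\<beta> = \<phi> \<alpha>"
  have \<phi>: "linear_functional K \<phi>"
    unfolding \<phi>_def using linear_functional_mult_arg[OF lf] .
  have \<beta>: "\<beta> \<in> K"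
    unfolding \<beta>_def by (rule linear_functional_mem[OF \<phi>])
  have "\<alpha> - \<beta> \<noteq> 0"
    using \<open>\<alpha> \<notin> K\<close> \<beta> by auto
  then obtain c\<^sub>1 where c\<^sub>1: "f (c\<^sub>1 * (\<alpha> - \<beta>)) = 1"
    using linear_functional_attains[OF sf lf \<open>f x\<^sub>0 \<noteq> 0\<close> subfield_one[OF sf]] by blast
  define \<psi> where "\<psi> x = f (c\<^sub>1 * x)" for x
  have \<psi>: "linear_functional K \<psi>"
    unfolding \<psi>_def using linear_functional_mult_arg[OF lf] .
  \<comment> \<open>\<open>\<phi>\<close> and \<open>\<chi>\<close> are the dual basis of \<open>1, \<alpha> - \<beta>\<close>.\<close>
  define \<chi> where "\<chi> x = \<psi> x - \<psi> 1 * \<phi> x" for x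
  have \<chi>: "linear_functional K \<chi>"
    using linear_functional_lincomb[OF sf \<psi> \<phi> subfield_one[OF sf]
        subfield_uminus[OF sf linear_functional_mem[OF \<psi>]]]
    unfolding \<chi>_def by simp
  have \<chi>1: "\<chi> 1 = 0" and \<chi>\<alpha>: "\<chi> \<alpha> = 1"
  proof -
    have "\<phi> 1 = 1"
      unfolding \<phi>_def using c\<^sub>0 by simp
    then show "\<chi> 1 = 0"
      unfolding \<chi>_def by simp
    have "\<psi> \<alpha> - \<psi> 1 * \<beta> = \<psi> (\<alpha> - \<beta> * 1)"
      using linear_functional_diff[OF \<psi>] linear_functional_scale[OF \<psi> \<beta>, of 1]
      by (simp add: mult.commute)
    then show "\<chi> \<alpha> = 1"
      unfolding \<chi>_def \<beta>_def[symmetric] using c\<^sub>1 by (simp add: \<psi>_def)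
  qed
  define g where "g x = a * \<phi> x + (b - a * \<beta>) * \<chi> x" for x
  have "linear_functional K g"
    unfolding g_def using assms \<beta>
    by (intro linear_functional_lincomb[OF sf \<phi> \<chi>]) (auto intro: subfield_diff subfield_mult)
  moreover have "g 1 = a" "g \<alpha> = b"
    unfolding g_def \<beta>_def using \<chi>1 \<chi>\<alpha> c\<^sub>0 by (simp_all add: \<phi>_def)
  ultimately show ?thesis by blast
qed

lemma card_fibre_linear_functional:
  fixes K :: "'a::{field,finite} set"
  assumes sf: "is_subfield K" and lf: "linear_functional K f" and "f x\<^sub>0 \<noteq> 0" "v \<in> K"
  shows "card {x. f x = v} = card {x. f x = 0}"
proof -
  obtain c where c: "f (c * 1) = v"
    using linear_functional_attains[OF assms, of 1] by auto
  have "{x. f x = v} = (+) c ` {x. f x = 0}"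
  proof (intro set_eqI iffI)
    fix x
    assume "x \<in> {x. f x = v}"
    then have "x - c \<in> {x. f x = 0}"
      using c linear_functional_diff[OF lf] by simp
    then show "x \<in> (+) c ` {x. f x = 0}"
      by (rule rev_image_eqI) simp
  qed (use c linear_functional_add[OF lf] in auto)
  then show ?thesis
    by (simp add: card_image)
qed

lemma card_UNIV_linear_functional:
  fixes K :: "'a::{field,finite} set"
  assumes "is_subfield K" "linear_functional K f" "f x\<^sub>0 \<noteq> 0"
  shows "card (UNIV :: 'a set) = card K * card {x. f x = 0}"
proof -
  have "(\<Union>v\<in>K. {x. f x = v}) = UNIV"
    using linear_functional_mem[OF assms(2)] by auto
  then have "card (UNIV :: 'a set) = card (\<Union>v\<in>K. {x. f x = v})"
    by simp
  also have "\<dots> = (\<Sum>v\<in>K. card {x. f x = v})"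
    by (rule card_UN_disjoint) auto
  also have "\<dots> = card K * card {x. f x = 0}"
    using card_fibre_linear_functional[OF assms] by simp
  finally show ?thesis .
qed

lemma card_vimage_inverse: "card (inverse -` A) = card (A :: 'a::division_ring set)"
proof (rule card_vimage_inj)
  show "inj (inverse :: 'a \<Rightarrow> 'a)"
    by (metis injI inverse_inverse_eq)
  show "A \<subseteq> range inverse"
    by (metis inverse_inverse_eq rangeI subsetI)
qed

lemma inj_fractional_linear:
  fixes u c d :: "'a::field"
  assumes "u \<noteq> 0" "c \<noteq> 0"
  shows "inj (\<lambda>x. u / (c * x - d))"
proof (rule injI)
  fix x y
  assume "u / (c * x - d) = u / (c * y - d)"
  then have "inverse (c * x - d) = inverse (c * y - d)"
    using \<open>u \<noteq> 0\<close> by (simp add: divide_inverse)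
  then show "x = y"
    using \<open>c \<noteq> 0\<close> by simp
qed

text \<open>The hypothesis \<open>card K \<le> card {x. f x = 0}\<close> says that the extension has degree at
  least \<open>2\<close>.\<close>

lemma exists_alpha_avoiding_exceptional_sets:
  fixes K :: "'a::{field,finite} set"
  assumes sf: "is_subfield K" and lf: "linear_functional K f" and "f x\<^sub>0 \<noteq> 0"
    and small: "card K \<le> card {x. f x = 0}"
  shows "\<exists>\<alpha>. \<alpha> \<notin> K \<and> f (1 / \<alpha>) \<noteq> 0 \<and>
           (\<forall>k\<in>K. k \<noteq> 0 \<and> k \<noteq> 1 \<longrightarrow> f ((k - 1) / (k * (k - 1) * \<alpha> - k ^ 2)) \<noteq> 1)"
proof -
  define q where "q = card K"
  define P where "P = card {x. f x = 0}"
  define B\<^sub>0 where "B\<^sub>0 = inverse -` {x. f x = 0}"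
  define B where "B k = (\<lambda>\<alpha>. (k - 1) / (k * (k - 1) * \<alpha> - k ^ 2)) -` {x. f x = 1}" for k
  define Bad where "Bad = (K - {0}) \<union> B\<^sub>0 \<union> (\<Union>k\<in>K - {0, 1}. B k)"
  have "{0, 1} \<subseteq> K"
    using sf by (simp add: subfield_zero subfield_one)
  then have card_K01: "card (K - {0, 1}) = q - 2" and "2 \<le> q"
    unfolding q_def using card_mono[of K "{0, 1}"] by (simp_all add: card_Diff_subset)
  have "card B\<^sub>0 = P"
    unfolding B\<^sub>0_def P_def by (rule card_vimage_inverse)
  have card_B: "card (B k) \<le> P" if "k \<in> K - {0, 1}" for k
  proof -
    have "inj (\<lambda>\<alpha>. (k - 1) / (k * (k - 1) * \<alpha> - k ^ 2))"
      using that by (intro inj_fractional_linear) auto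
    then have "card (B k) \<le> card {x. f x = 1}"
      unfolding B_def using card_vimage_inj_on_le[of _ UNIV "{x. f x = 1}"] by simp
    then show ?thesis
      unfolding P_def
      using card_fibre_linear_functional[OF sf lf \<open>f x\<^sub>0 \<noteq> 0\<close> subfield_one[OF sf]] by simp
  qed
  have "card (\<Union>k\<in>K - {0, 1}. B k) \<le> (\<Sum>k\<in>K - {0, 1}. card (B k))"
    by (rule card_UN_le) simp
  also have "\<dots> \<le> (q - 2) * P"
    using sum_mono[of "K - {0, 1}" "\<lambda>k. card (B k)" "\<lambda>_. P"] card_B card_K01 by simp
  finally have "card Bad \<le> (q - 1) + P + (q - 2) * P"
    unfolding Bad_def using \<open>card B\<^sub>0 = P\<close> card_Un_le[of "K - {0}" B\<^sub>0] q_def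
      card_Un_le[of "(K - {0}) \<union> B\<^sub>0" "\<Union>k\<in>K - {0, 1}. B k"]
    by (simp add: card_Diff_singleton subfield_zero[OF sf])
  also have "\<dots> < q * P"
    using \<open>2 \<le> q\<close> small unfolding q_def[symmetric] P_def[symmetric]
    by (cases q) (auto simp: algebra_simps)
  also have "\<dots> = card (UNIV :: 'a set)"
    unfolding q_def P_def using card_UNIV_linear_functional[OF sf lf \<open>f x\<^sub>0 \<noteq> 0\<close>] by simp
  finally have "Bad \<noteq> UNIV"
    by auto
  then obtain \<alpha> where \<alpha>: "\<alpha> \<notin> Bad"
    by blast
  have "0 \<in> B\<^sub>0"
    unfolding B\<^sub>0_def using linear_functional_zero[OF lf] by simp
  then have "\<alpha> \<notin> K"
    using \<alpha> unfolding Bad_def by auto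
  with \<alpha> show ?thesis
    unfolding Bad_def B\<^sub>0_def B_def by (auto simp: inverse_eq_divide)
qed

theorem proposition3p5:
  fixes K :: "'a::{field,finite} set" and q h :: nat and f :: "'a \<Rightarrow> 'a"
  assumes "is_subfield K"
    and "card K = q"
    and "h \<ge> 2"
    and "card (UNIV :: 'a set) = q ^ h"
    and "linear_functional K f"
    and "\<exists>x. f x \<noteq> 0"
  shows "\<exists>\<alpha> g. \<alpha> \<notin> K \<and> linear_functional K g \<and>
           g 1 = 1 \<and> g \<alpha> = 1 \<and>
           f (1 / \<alpha>) \<noteq> 0 \<and>
           (\<forall>k\<in>K. k \<noteq> 0 \<and> k \<noteq> 1 \<longrightarrow>
              f ((k - 1) / (k * (k - 1) * \<alpha> - k ^ 2)) \<noteq> 1)"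
proof -
  note sf = assms(1) and lf = assms(5)
  obtain x\<^sub>0 where "f x\<^sub>0 \<noteq> 0"
    using assms(6) by blast
  have "0 < q"
    using assms(2) subfield_zero[OF sf] by (auto simp: card_gt_0_iff)
  have "q ^ h = q * q ^ (h - 1)"
    using assms(3) by (cases h) auto
  then have "card {x. f x = 0} = q ^ (h - 1)"
    using card_UNIV_linear_functional[OF sf lf \<open>f x\<^sub>0 \<noteq> 0\<close>] assms(2,4) \<open>0 < q\<close>
    by auto
  moreover have "q \<le> q ^ (h - 1)"
    using \<open>0 < q\<close> assms(3) by (intro self_le_power) auto
  ultimately have "card K \<le> card {x. f x = 0}"
    using assms(2) by simp
  then obtain \<alpha> where \<alpha>: "\<alpha> \<notin> K" "f (1 / \<alpha>) \<noteq> 0"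
    "\<forall>k\<in>K. k \<noteq> 0 \<and> k \<noteq> 1 \<longrightarrow> f ((k - 1) / (k * (k - 1) * \<alpha> - k ^ 2)) \<noteq> 1"
    using exists_alpha_avoiding_exceptional_sets[OF sf lf \<open>f x\<^sub>0 \<noteq> 0\<close>] by blast
  obtain g where g: "linear_functional K g" "g 1 = 1" "g \<alpha> = 1"
    using linear_functional_interpolate[OF sf lf \<open>f x\<^sub>0 \<noteq> 0\<close> \<open>\<alpha> \<notin> K\<close>] subfield_one[OF sf]
    by blast
  show ?thesis
    using \<alpha> g by blast
qed

end
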